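(* Let $\Phi$ be a nonempty finite set of Boolean formulas built from variables and the constants $\mathrm{True},\mathrm{False}$ using $\wedge$, $\vee$, $\neg$, and let $X$ be the set of variables occurring in $\Phi$. Assume $\Phi$ is overall read-once, i.e., every variable of $X$ occurs exactly once in total across all the formulas of $\Phi$, and that every $\phi\in\Phi$ is non-simplifiable, i.e., $\phi$ is either one of the constants $\mathrm{True}$ or $\mathrm{False}$, or contains no occurrence of a constant. Then $\Phi$ is evasive (with respect to $X$), i.e., every BDD for $\Phi$ has depth $|X|$. *)

theory Defs
  imports Main
begin

datatype 'v form = Var 'v | TT | FF | And "'v form" "'v form" | Or "'v form" "'v form" | Neg "'v form"

fun eval :: "('v \<Rightarrow> bool) \<Rightarrow> 'v form \<Rightarrow> bool" where
  "eval \<sigma> (Var x) = \<sigma> x"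
| "eval \<sigma> TT = True"
| "eval \<sigma> FF = False"
| "eval \<sigma> (And a b) = (eval \<sigma> a \<and> eval \<sigma> b)"
| "eval \<sigma> (Or a b) = (eval \<sigma> a \<or> eval \<sigma> b)"
| "eval \<sigma> (Neg a) = (\<not> eval \<sigma> a)"

fun fvars :: "'v form \<Rightarrow> 'v set" where
  "fvars (Var x) = {x}"
| "fvars TT = {}"
| "fvars FF = {}"
| "fvars (And a b) = fvars a \<union> fvars b"
| "fvars (Or a b) = fvars a \<union> fvars b"
| "fvars (Neg a) = fvars a"

fun occ :: "'v \<Rightarrow> 'v form \<Rightarrow> nat" where
  "occ x (Var y) = (if x = y then 1 else 0)"
| "occ x TT = 0"
| "occ x FF = 0"
| "occ x (And a b) = occ x a + occ x b"
| "occ x (Or a b) = occ x a + occ x b"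
| "occ x (Neg a) = occ x a"

fun has_const :: "'v form \<Rightarrow> bool" where
  "has_const (Var x) = False"
| "has_const TT = True"
| "has_const FF = True"
| "has_const (And a b) = (has_const a \<or> has_const b)"
| "has_const (Or a b) = (has_const a \<or> has_const b)"
| "has_const (Neg a) = has_const a"

definition vars_of :: "'v form set \<Rightarrow> 'v set" where
  "vars_of \<Phi> = (\<Union>\<phi>\<in>\<Phi>. fvars \<phi>)"

definition overall_read_once :: "'v form set \<Rightarrow> bool" where
  "overall_read_once \<Phi> \<longleftrightarrow> (\<forall>x\<in>vars_of \<Phi>. (\<Sum>\<phi>\<in>\<Phi>. occ x \<phi>) = 1)"

definition non_simplifiable :: "'v form \<Rightarrow> bool" where
  "non_simplifiable \<phi> \<longleftrightarrow> \<phi> = TT \<or> \<phi> = FF \<or> \<not> has_const \<phi>"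

section \<open>Binary decision diagrams (unfolded to decision trees)\<close>

datatype ('v, 'o) bdd = Leaf 'o | Node 'v "('v, 'o) bdd" "('v, 'o) bdd"

fun run :: "('v \<Rightarrow> bool) \<Rightarrow> ('v, 'o) bdd \<Rightarrow> 'o" where
  "run \<sigma> (Leaf o') = o'"
| "run \<sigma> (Node x lo hi) = (if \<sigma> x then run \<sigma> hi else run \<sigma> lo)"

fun tvars :: "('v, 'o) bdd \<Rightarrow> 'v set" where
  "tvars (Leaf _) = {}"
| "tvars (Node x lo hi) = insert x (tvars lo \<union> tvars hi)"

fun path_read_once :: "('v, 'o) bdd \<Rightarrow> bool" where
  "path_read_once (Leaf _) = True"
| "path_read_once (Node x lo hi) =
     (x \<notin> tvars lo \<and> x \<notin> tvars hi \<and> path_read_once lo \<and> path_read_once hi)"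

fun depth :: "('v, 'o) bdd \<Rightarrow> nat" where
  "depth (Leaf _) = 0"
| "depth (Node x lo hi) = Suc (max (depth lo) (depth hi))"

definition is_bdd_for :: "'v form set \<Rightarrow> 'v set \<Rightarrow> ('v, 'v form \<Rightarrow> bool) bdd \<Rightarrow> bool" where
  "is_bdd_for \<Phi> X B \<longleftrightarrow> tvars B \<subseteq> X \<and> path_read_once B \<and>
     (\<forall>\<sigma>. \<forall>\<phi>\<in>\<Phi>. run \<sigma> B \<phi> = eval \<sigma> \<phi>)"

definition evasive :: "'v form set \<Rightarrow> 'v set \<Rightarrow> bool" where
  "evasive \<Phi> X \<longleftrightarrow> (\<forall>B. is_bdd_for \<Phi> X B \<longrightarrow> depth B = card X)"

end

theory Submission
  imports Defs
begin

text \<open>An adversary argument. Call a family of formulas good if it is read-once overall and each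
  member is a constant or constant-free. A constant-free read-once formula takes both truth values,
  so a BDD cannot stop while some formula of a good family still has a variable. When the BDD tests
  x, which occurs in at most one formula, the adversary answers with the value c that turns the
  literal on x into the neutral element of the connective above it (or, if the formula is just a
  literal, into a constant); deleting that literal leaves an equivalent good family over the
  remaining variables. Hence every path tests all variables, while path-read-once BDDs have depth
  at most the number of variables they test.\<close>

lemma occ_eq_0_iff: "occ x \<phi> = 0 \<longleftrightarrow> x \<notin> fvars \<phi>"
  by (induction \<phi>) auto

lemma finite_fvars [simp]: "finite (fvars \<phi>)"
  by (induction \<phi>) auto

definition read_once :: "'v form \<Rightarrow> bool" where
  "read_once \<phi> \<longleftrightarrow> (\<forall>y. occ y \<phi> \<le> 1)"

lemma read_once_binary:
  "(\<forall>y. occ y p + occ y q \<le> 1) \<longleftrightarrow> read_once p \<and> read_once q \<and> fvars p \<inter> fvars q = {}"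
proof -
  have "fvars p \<inter> fvars q = {} \<longleftrightarrow> (\<forall>y. occ y p = 0 \<or> occ y q = 0)"
    by (auto simp: occ_eq_0_iff)
  moreover have "occ y p + occ y q \<le> 1 \<longleftrightarrow>
      occ y p \<le> 1 \<and> occ y q \<le> 1 \<and> (occ y p = 0 \<or> occ y q = 0)" for y
    by auto
  ultimately show ?thesis
    unfolding read_once_def by auto
qed

lemma read_once_simps [simp]:
  "read_once (And p q) \<longleftrightarrow> read_once p \<and> read_once q \<and> fvars p \<inter> fvars q = {}"
  "read_once (Or p q) \<longleftrightarrow> read_once p \<and> read_once q \<and> fvars p \<inter> fvars q = {}"
  "read_once (Neg p) \<longleftrightarrow> read_once p"
  using read_once_binary[of p q] by (simp_all add: read_once_def)

lemma eval_cong: "(\<And>y. y \<in> fvars \<phi> \<Longrightarrow> \<sigma> y = \<tau> y) \<Longrightarrow> eval \<sigma> \<phi> = eval \<tau> \<phi>"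
  by (induction \<phi>) auto

lemma fvars_nonempty_if_no_const: "\<not> has_const \<phi> \<Longrightarrow> fvars \<phi> \<noteq> {}"
  by (induction \<phi>) auto

lemma eval_disjoint_fvars:
  assumes "fvars p \<inter> fvars q = {}"
  obtains \<sigma> where "eval \<sigma> p = eval \<sigma>\<^sub>1 p" and "eval \<sigma> q = eval \<sigma>\<^sub>2 q"
proof
  let ?\<sigma> = "\<lambda>y. if y \<in> fvars p then \<sigma>\<^sub>1 y else \<sigma>\<^sub>2 y"
  show "eval ?\<sigma> p = eval \<sigma>\<^sub>1 p" by (rule eval_cong) simp
  show "eval ?\<sigma> q = eval \<sigma>\<^sub>2 q" by (rule eval_cong) (use assms in auto)
qed

lemma read_once_eval_surj:
  assumes "\<not> has_const \<phi>" and "read_once \<phi>"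
  shows "\<exists>\<sigma>. eval \<sigma> \<phi> = b"
  using assms
proof (induction \<phi> arbitrary: b)
  case (Var x)
  show ?case by (rule exI[of _ "\<lambda>_. b"]) simp
next
  case (And p q)
  then have "\<not> has_const p" "read_once p" "\<not> has_const q" "read_once q"
    and disj: "fvars p \<inter> fvars q = {}"
    by auto
  \<comment> \<open>both operands can be given the value b at once because they share no variable\<close>
  with And.IH obtain \<sigma>\<^sub>1 \<sigma>\<^sub>2 where "eval \<sigma>\<^sub>1 p = b" "eval \<sigma>\<^sub>2 q = b"
    by blast
  moreover obtain \<sigma> where "eval \<sigma> p = eval \<sigma>\<^sub>1 p" "eval \<sigma> q = eval \<sigma>\<^sub>2 q"
    using eval_disjoint_fvars[OF disj] .
  ultimately show ?case by auto
next
  case (Or p q)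
  then have "\<not> has_const p" "read_once p" "\<not> has_const q" "read_once q"
    and disj: "fvars p \<inter> fvars q = {}"
    by auto
  with Or.IH obtain \<sigma>\<^sub>1 \<sigma>\<^sub>2 where "eval \<sigma>\<^sub>1 p = b" "eval \<sigma>\<^sub>2 q = b"
    by blast
  moreover obtain \<sigma> where "eval \<sigma> p = eval \<sigma>\<^sub>1 p" "eval \<sigma> q = eval \<sigma>\<^sub>2 q"
    using eval_disjoint_fvars[OF disj] .
  ultimately show ?case by auto
next
  case (Neg p)
  then obtain \<sigma> where "eval \<sigma> p = (\<not> b)" by fastforce
  then show ?case by auto
qed simp_all

lemma read_once_literal:
  assumes "\<not> has_const \<phi>" and "read_once \<phi>" and "fvars \<phi> = {x}"
  shows "\<exists>c. \<forall>\<sigma>. \<sigma> x = c \<longrightarrow> eval \<sigma> \<phi> = b"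
  using assms
proof (induction \<phi> arbitrary: b)
  case (And p q)
  have "fvars p \<noteq> {}" "fvars q \<noteq> {}"
    using And.prems(1) fvars_nonempty_if_no_const by auto
  with And.prems show ?case by (auto simp: Un_singleton_iff)
next
  case (Or p q)
  have "fvars p \<noteq> {}" "fvars q \<noteq> {}"
    using Or.prems(1) fvars_nonempty_if_no_const by auto
  with Or.prems show ?case by (auto simp: Un_singleton_iff)
next
  case (Neg p)
  then obtain c where "\<forall>\<sigma>. \<sigma> x = c \<longrightarrow> eval \<sigma> p = (\<not> b)" by fastforce
  then show ?case by auto
qed auto

definition is_restriction :: "'v \<Rightarrow> bool \<Rightarrow> 'v form \<Rightarrow> 'v form \<Rightarrow> bool" where
  "is_restriction x c \<phi> \<psi> \<longleftrightarrow>
     fvars \<psi> = fvars \<phi> - {x} \<and> (\<forall>y. occ y \<psi> \<le> occ y \<phi>) \<and>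
     (\<forall>\<sigma>. \<sigma> x = c \<longrightarrow> eval \<sigma> \<psi> = eval \<sigma> \<phi>)"

lemma is_restriction_exists_binary:
  assumes p: "\<not> has_const p" "read_once p" and q: "\<not> has_const q" "read_once q"
    and disj: "fvars p \<inter> fvars q = {}" and x: "x \<in> fvars p \<union> fvars q"
    and IH_p: "x \<in> fvars p \<Longrightarrow> fvars p \<noteq> {x} \<Longrightarrow> \<exists>c p'. is_restriction x c p p' \<and> \<not> has_const p'"
    and IH_q: "x \<in> fvars q \<Longrightarrow> fvars q \<noteq> {x} \<Longrightarrow> \<exists>c q'. is_restriction x c q q' \<and> \<not> has_const q'"
  shows "\<exists>c \<psi>. is_restriction x c (And p q) \<psi> \<and> \<not> has_const \<psi>"
    and "\<exists>c \<psi>. is_restriction x c (Or p q) \<psi> \<and> \<not> has_const \<psi>"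
proof -
  consider (lit_p) "fvars p = {x}" | (lit_q) "fvars q = {x}"
    | (in_p) "x \<in> fvars p" "fvars p \<noteq> {x}" | (in_q) "x \<in> fvars q" "fvars q \<noteq> {x}"
    using x by auto
  then have "(\<exists>c \<psi>. is_restriction x c (And p q) \<psi> \<and> \<not> has_const \<psi>) \<and>
    (\<exists>c \<psi>. is_restriction x c (Or p q) \<psi> \<and> \<not> has_const \<psi>)"
  proof cases
    case lit_p
    \<comment> \<open>fix the literal p to the neutral value of the connective and drop it\<close>
    obtain c\<^sub>1 where "\<forall>\<sigma>. \<sigma> x = c\<^sub>1 \<longrightarrow> eval \<sigma> p"
      using read_once_literal[OF p lit_p, of True] by blast
    moreover obtain c\<^sub>2 where "\<forall>\<sigma>. \<sigma> x = c\<^sub>2 \<longrightarrow> \<not> eval \<sigma> p"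
      using read_once_literal[OF p lit_p, of False] by blast
    ultimately have "is_restriction x c\<^sub>1 (And p q) q" "is_restriction x c\<^sub>2 (Or p q) q"
      using lit_p disj by (auto simp: is_restriction_def)
    with q show ?thesis by blast
  next
    case lit_q
    obtain c\<^sub>1 where "\<forall>\<sigma>. \<sigma> x = c\<^sub>1 \<longrightarrow> eval \<sigma> q"
      using read_once_literal[OF q lit_q, of True] by blast
    moreover obtain c\<^sub>2 where "\<forall>\<sigma>. \<sigma> x = c\<^sub>2 \<longrightarrow> \<not> eval \<sigma> q"
      using read_once_literal[OF q lit_q, of False] by blast
    ultimately have "is_restriction x c\<^sub>1 (And p q) p" "is_restriction x c\<^sub>2 (Or p q) p"
      using lit_q disj by (auto simp: is_restriction_def)
    with p show ?thesis by blast
  next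
    case in_p
    then obtain c p' where "is_restriction x c p p'" "\<not> has_const p'"
      using IH_p by blast
    with in_p disj q
    have "is_restriction x c (And p q) (And p' q)" "is_restriction x c (Or p q) (Or p' q)"
      and "\<not> has_const (And p' q)" "\<not> has_const (Or p' q)"
      by (auto simp: is_restriction_def add_mono)
    then show ?thesis by blast
  next
    case in_q
    then obtain c q' where "is_restriction x c q q'" "\<not> has_const q'"
      using IH_q by blast
    with in_q disj p
    have "is_restriction x c (And p q) (And p q')" "is_restriction x c (Or p q) (Or p q')"
      and "\<not> has_const (And p q')" "\<not> has_const (Or p q')"
      by (auto simp: is_restriction_def add_mono)
    then show ?thesis by blast
  qed
  then show "\<exists>c \<psi>. is_restriction x c (And p q) \<psi> \<and> \<not> has_const \<psi>"
    and "\<exists>c \<psi>. is_restriction x c (Or p q) \<psi> \<and> \<not> has_const \<psi>"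
    by blast+
qed

lemma is_restriction_exists:
  assumes "\<not> has_const \<phi>" and "read_once \<phi>" and "x \<in> fvars \<phi>" and "fvars \<phi> \<noteq> {x}"
  shows "\<exists>c \<psi>. is_restriction x c \<phi> \<psi> \<and> \<not> has_const \<psi>"
  using assms
proof (induction \<phi>)
  case (And p q)
  then have p: "\<not> has_const p" "read_once p" and q: "\<not> has_const q" "read_once q"
    and dx: "fvars p \<inter> fvars q = {}" "x \<in> fvars p \<union> fvars q"
    by auto
  from is_restriction_exists_binary(1)[OF p q dx And.IH(1)[OF p] And.IH(2)[OF q]]
  show ?case .
next
  case (Or p q)
  then have p: "\<not> has_const p" "read_once p" and q: "\<not> has_const q" "read_once q"
    and dx: "fvars p \<inter> fvars q = {}" "x \<in> fvars p \<union> fvars q"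
    by auto
  from is_restriction_exists_binary(2)[OF p q dx Or.IH(1)[OF p] Or.IH(2)[OF q]]
  show ?case .
next
  case (Neg p)
  then obtain c p' where "is_restriction x c p p'" "\<not> has_const p'" by auto
  then have "is_restriction x c (Neg p) (Neg p')" "\<not> has_const (Neg p')"
    by (auto simp: is_restriction_def)
  then show ?case by blast
qed auto

lemma non_simplifiable_restriction_exists:
  assumes "non_simplifiable \<phi>" and "read_once \<phi>" and "x \<in> fvars \<phi>"
  obtains c \<psi> where "is_restriction x c \<phi> \<psi>" and "non_simplifiable \<psi>"
proof -
  have nc: "\<not> has_const \<phi>"
    using assms(1,3) unfolding non_simplifiable_def by auto
  show ?thesis
  proof (cases "fvars \<phi> = {x}")
    case True
    then obtain c where "\<forall>\<sigma>. \<sigma> x = c \<longrightarrow> eval \<sigma> \<phi>"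
      using read_once_literal[OF nc assms(2), of x True] by blast
    with True have "is_restriction x c \<phi> TT"
      by (simp add: is_restriction_def)
    then show ?thesis by (rule that) (simp add: non_simplifiable_def)
  next
    case False
    then show ?thesis
      using that is_restriction_exists[OF nc assms(2,3)] unfolding non_simplifiable_def by blast
  qed
qed

definition read_once_family :: "'i set \<Rightarrow> ('i \<Rightarrow> 'v form) \<Rightarrow> bool" where
  "read_once_family I F \<longleftrightarrow> (\<forall>y. (\<Sum>i\<in>I. occ y (F i)) \<le> 1)"

lemma read_once_family_member:
  assumes "finite I" and "read_once_family I F" and "i \<in> I"
  shows "read_once (F i)"
  unfolding read_once_def
proof
  fix y
  have "occ y (F i) \<le> (\<Sum>k\<in>I. occ y (F k))"
    by (rule member_le_sum) (use assms in auto)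
  with assms(2) show "occ y (F i) \<le> 1"
    unfolding read_once_family_def by (meson order_trans)
qed

lemma read_once_family_unique_occurrence:
  assumes "finite I" and "read_once_family I F" and "i \<in> I" and "j \<in> I"
    and "x \<in> fvars (F i)" and "x \<in> fvars (F j)"
  shows "i = j"
proof (rule ccontr)
  assume "i \<noteq> j"
  have "(\<Sum>k\<in>{i, j}. occ x (F k)) \<le> (\<Sum>k\<in>I. occ x (F k))"
    using assms(1,3,4) by (intro sum_mono2) auto
  moreover have "occ x (F i) \<noteq> 0" and "occ x (F j) \<noteq> 0"
    using assms(5,6) by (simp_all add: occ_eq_0_iff)
  then have "(\<Sum>k\<in>{i, j}. occ x (F k)) \<ge> 2"
    using \<open>i \<noteq> j\<close> by simp
  moreover have "(\<Sum>k\<in>I. occ x (F k)) \<le> 1"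
    using assms(2) unfolding read_once_family_def by blast
  ultimately show False by linarith
qed

lemma read_once_family_restriction:
  assumes "finite I" and "read_once_family I F" and "\<forall>i\<in>I. non_simplifiable (F i)"
  obtains c F' where "read_once_family I F'" and "\<forall>i\<in>I. non_simplifiable (F' i)"
    and "(\<Union>i\<in>I. fvars (F' i)) = (\<Union>i\<in>I. fvars (F i)) - {x}"
    and "\<forall>i\<in>I. \<forall>\<sigma>. \<sigma> x = c \<longrightarrow> eval \<sigma> (F' i) = eval \<sigma> (F i)"
proof (cases "\<exists>j\<in>I. x \<in> fvars (F j)")
  case False
  then show ?thesis by (intro that[of F False]) (use assms in auto)
next
  case True
  then obtain j where j: "j \<in> I" "x \<in> fvars (F j)" by blast
  obtain c \<psi> where \<psi>: "is_restriction x c (F j) \<psi>" "non_simplifiable \<psi>"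
    using non_simplifiable_restriction_exists[OF _ read_once_family_member[OF assms(1,2) j(1)] j(2)]
      assms(3) j(1) by blast
  have only_j: "x \<notin> fvars (F i)" if "i \<in> I" "i \<noteq> j" for i
    using read_once_family_unique_occurrence[OF assms(1,2) that(1) j(1) _ j(2)] that(2) by blast
  show ?thesis
  proof (rule that[of "F(j := \<psi>)" c])
    have "(\<Sum>i\<in>I. occ y ((F(j := \<psi>)) i)) \<le> (\<Sum>i\<in>I. occ y (F i))" for y
      using \<psi>(1) by (intro sum_mono) (simp add: is_restriction_def)
    with assms(2) show "read_once_family I (F(j := \<psi>))"
      unfolding read_once_family_def by (meson order_trans)
    show "\<forall>i\<in>I. non_simplifiable ((F(j := \<psi>)) i)"
      using assms(3) \<psi>(2) by simp
    show "(\<Union>i\<in>I. fvars ((F(j := \<psi>)) i)) = (\<Union>i\<in>I. fvars (F i)) - {x}"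
      using \<psi>(1) j only_j by (auto simp: is_restriction_def split: if_splits)
    show "\<forall>i\<in>I. \<forall>\<sigma>. \<sigma> x = c \<longrightarrow> eval \<sigma> ((F(j := \<psi>)) i) = eval \<sigma> (F i)"
      using \<psi>(1) by (simp add: is_restriction_def)
  qed
qed

lemma run_cong: "(\<And>y. y \<in> tvars B \<Longrightarrow> \<sigma> y = \<tau> y) \<Longrightarrow> run \<sigma> B = run \<tau> B"
  by (induction B) auto

lemma finite_tvars [simp]: "finite (tvars B)"
  by (induction B) auto

lemma depth_le_card_tvars: "path_read_once B \<Longrightarrow> depth B \<le> card (tvars B)"
proof (induction B)
  case (Node x lo hi)
  have "card (tvars lo) \<le> card (tvars lo \<union> tvars hi)" "card (tvars hi) \<le> card (tvars lo \<union> tvars hi)"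
    by (simp_all add: card_mono)
  with Node show ?case by auto
qed simp

definition computes :: "('v, 'i \<Rightarrow> bool) bdd \<Rightarrow> 'i set \<Rightarrow> ('i \<Rightarrow> 'v form) \<Rightarrow> bool" where
  "computes B I F \<longleftrightarrow> (\<forall>\<sigma>. \<forall>i\<in>I. run \<sigma> B i = eval \<sigma> (F i))"

lemma computes_branch:
  assumes "computes (Node x lo hi) I F" and "x \<notin> tvars (if c then hi else lo)"
    and "\<forall>i\<in>I. x \<notin> fvars (F' i)"
    and "\<forall>i\<in>I. \<forall>\<sigma>. \<sigma> x = c \<longrightarrow> eval \<sigma> (F' i) = eval \<sigma> (F i)"
  shows "computes (if c then hi else lo) I F'"
  unfolding computes_def
proof (intro allI ballI)
  fix \<sigma> i assume "i \<in> I"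
  have "run \<sigma> (if c then hi else lo) = run (\<sigma>(x := c)) (if c then hi else lo)"
    by (rule run_cong) (use assms(2) in auto)
  also have "\<dots> = run (\<sigma>(x := c)) (Node x lo hi)"
    by simp
  finally have "run \<sigma> (if c then hi else lo) i = run (\<sigma>(x := c)) (Node x lo hi) i"
    by simp
  also have "\<dots> = eval (\<sigma>(x := c)) (F i)"
    using assms(1) \<open>i \<in> I\<close> unfolding computes_def by blast
  also have "\<dots> = eval (\<sigma>(x := c)) (F' i)"
    using assms(4) \<open>i \<in> I\<close> by simp
  also have "\<dots> = eval \<sigma> (F' i)"
    by (rule eval_cong) (use assms(3) \<open>i \<in> I\<close> in auto)
  finally show "run \<sigma> (if c then hi else lo) i = eval \<sigma> (F' i)" .
qed

lemma computes_Leaf_fvars_empty: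
  assumes "computes (Leaf out) I F" and "finite I" and "read_once_family I F"
    and "\<forall>i\<in>I. non_simplifiable (F i)" and "i \<in> I"
  shows "fvars (F i) = {}"
proof (rule ccontr)
  assume "fvars (F i) \<noteq> {}"
  then have "\<not> has_const (F i)"
    using assms(4,5) unfolding non_simplifiable_def by auto
  with read_once_family_member[OF assms(2,3,5)] obtain \<sigma>\<^sub>1 \<sigma>\<^sub>2
    where "eval \<sigma>\<^sub>1 (F i)" and "\<not> eval \<sigma>\<^sub>2 (F i)"
    using read_once_eval_surj by metis
  with assms(1,5) show False
    unfolding computes_def by auto
qed

lemma card_fvars_le_depth:
  assumes "finite I" and "read_once_family I F" and "\<forall>i\<in>I. non_simplifiable (F i)"
    and "path_read_once B" and "computes B I F"
  shows "card (\<Union>i\<in>I. fvars (F i)) \<le> depth B"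
  using assms(2-5)
proof (induction B arbitrary: F)
  case (Leaf out)
  then show ?case
    using computes_Leaf_fvars_empty[OF Leaf.prems(4) assms(1) Leaf.prems(1,2)] by simp
next
  case (Node x lo hi)
  obtain c F' where F': "read_once_family I F'" "\<forall>i\<in>I. non_simplifiable (F' i)"
    and vars: "(\<Union>i\<in>I. fvars (F' i)) = (\<Union>i\<in>I. fvars (F i)) - {x}"
    and agree: "\<forall>i\<in>I. \<forall>\<sigma>. \<sigma> x = c \<longrightarrow> eval \<sigma> (F' i) = eval \<sigma> (F i)"
    using read_once_family_restriction[OF assms(1) Node.prems(1,2)] by metis
  define child where "child = (if c then hi else lo)"
  have "computes child I F'"
    unfolding child_def using Node.prems(3,4) vars agree by (intro computes_branch) auto
  moreover have "path_read_once child"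
    using Node.prems(3) by (simp add: child_def)
  ultimately have "card (\<Union>i\<in>I. fvars (F' i)) \<le> depth child"
    using Node.IH F' by (cases c) (simp_all add: child_def)
  moreover have "depth child < depth (Node x lo hi)"
    by (simp add: child_def less_Suc_eq_le)
  moreover have "card (\<Union>i\<in>I. fvars (F i)) \<le> Suc (card (\<Union>i\<in>I. fvars (F' i)))"
    unfolding vars
    by (cases "x \<in> (\<Union>i\<in>I. fvars (F i))") (simp_all add: assms(1) card_Diff_singleton_if)
  ultimately show ?case by linarith
qed

lemma overall_read_once_imp_read_once_family:
  assumes "overall_read_once \<Phi>"
  shows "read_once_family \<Phi> id"
  unfolding read_once_family_def
proof
  fix y
  show "(\<Sum>\<phi>\<in>\<Phi>. occ y (id \<phi>)) \<le> 1"
  proof (cases "y \<in> vars_of \<Phi>")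
    case True
    then show ?thesis using assms by (simp add: overall_read_once_def)
  next
    case False
    then have "\<forall>\<phi>\<in>\<Phi>. occ y \<phi> = 0"
      by (simp add: vars_of_def occ_eq_0_iff)
    then show ?thesis by simp
  qed
qed

theorem proposition2:
  fixes \<Phi> :: "'v form set"
  assumes "finite \<Phi>" and "\<Phi> \<noteq> {}"
    and "overall_read_once \<Phi>"
    and "\<forall>\<phi>\<in>\<Phi>. non_simplifiable \<phi>"
  shows "evasive \<Phi> (vars_of \<Phi>)"
  unfolding evasive_def
proof (intro allI impI)
  fix B
  assume "is_bdd_for \<Phi> (vars_of \<Phi>) B"
  then have tests: "tvars B \<subseteq> vars_of \<Phi>" and "path_read_once B" and "computes B \<Phi> id"
    by (simp_all add: is_bdd_for_def computes_def)
  have "finite (vars_of \<Phi>)"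
    using assms(1) by (simp add: vars_of_def)
  have "depth B \<le> card (vars_of \<Phi>)"
    using depth_le_card_tvars[OF \<open>path_read_once B\<close>] card_mono[OF \<open>finite (vars_of \<Phi>)\<close> tests]
    by linarith
  moreover have "card (vars_of \<Phi>) \<le> depth B"
    using card_fvars_le_depth[OF assms(1) overall_read_once_imp_read_once_family[OF assms(3)]
        _ \<open>path_read_once B\<close> \<open>computes B \<Phi> id\<close>] assms(4)
    by (simp add: vars_of_def)
  ultimately show "depth B = card (vars_of \<Phi>)" by (rule antisym)
qed

end
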